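(* Let $G$ be a $(P_6,C_4)$-free graph and let $X$, $Y$, $\{c\}$ be pairwise disjoint subsets of $V(G)$ such that: $Y$ is a clique and every vertex of $X$ has a neighbor in $Y$; $c$ is complete to $X$ and anticomplete to $Y$; and either $G[X]$ is not connected, or there exist vertices $c',c''\in V(G)\setminus(X\cup Y)$ such that $c'$ is complete to $Y$ and anticomplete to $X$, $c''$ is anticomplete to $X\cup Y$, and $c'c''\in E(G)$. Then $G[X]$ is $(P_4,2P_3)$-free.
   Context: $2P_3$ is the disjoint union of two paths on three vertices. Complete/anticomplete: all edges / no edges between the two sets. *)

theory Defs
  imports Main
begin

definition graph :: "'a set \<Rightarrow> ('a \<Rightarrow> 'a \<Rightarrow> bool) \<Rightarrow> bool" where
  "graph V E \<longleftrightarrow> finite V \<and> (\<forall>x y. E x y \<longrightarrow> x \<in> V \<and> y \<in> V)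
     \<and> (\<forall>x y. E x y \<longrightarrow> E y x) \<and> (\<forall>x. \<not> E x x)"

definition has_induced :: "'a set \<Rightarrow> ('a \<Rightarrow> 'a \<Rightarrow> bool) \<Rightarrow> nat \<Rightarrow> (nat \<Rightarrow> nat \<Rightarrow> bool) \<Rightarrow> bool" where
  "has_induced S E k A \<longleftrightarrow> (\<exists>f. inj_on f {0..<k} \<and> f ` {0..<k} \<subseteq> S \<and>
      (\<forall>i<k. \<forall>j<k. E (f i) (f j) \<longleftrightarrow> A i j))"

definition path_adj :: "nat \<Rightarrow> nat \<Rightarrow> bool" where
  "path_adj i j \<longleftrightarrow> i + 1 = j \<or> j + 1 = i"

definition c4_adj :: "nat \<Rightarrow> nat \<Rightarrow> bool" where
  "c4_adj i j \<longleftrightarrow> (i + 1) mod 4 = j \<or> (j + 1) mod 4 = i"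

definition twoP3_adj :: "nat \<Rightarrow> nat \<Rightarrow> bool" where
  "twoP3_adj i j \<longleftrightarrow> {i, j} = {0, 1} \<or> {i, j} = {1, 2} \<or> {i, j} = {3, 4} \<or> {i, j} = {4, 5}"


definition complete_to :: "('a \<Rightarrow> 'a \<Rightarrow> bool) \<Rightarrow> 'a set \<Rightarrow> 'a set \<Rightarrow> bool" where
  "complete_to E A B \<longleftrightarrow> (\<forall>a\<in>A. \<forall>b\<in>B. E a b)"

definition anticomplete_to :: "('a \<Rightarrow> 'a \<Rightarrow> bool) \<Rightarrow> 'a set \<Rightarrow> 'a set \<Rightarrow> bool" where
  "anticomplete_to E A B \<longleftrightarrow> (\<forall>a\<in>A. \<forall>b\<in>B. \<not> E a b)"

definition clique :: "('a \<Rightarrow> 'a \<Rightarrow> bool) \<Rightarrow> 'a set \<Rightarrow> bool" where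
  "clique E S \<longleftrightarrow> (\<forall>x\<in>S. \<forall>y\<in>S. x \<noteq> y \<longrightarrow> E x y)"

definition connected_induced :: "('a \<Rightarrow> 'a \<Rightarrow> bool) \<Rightarrow> 'a set \<Rightarrow> bool" where
  "connected_induced E S \<longleftrightarrow> S \<noteq> {} \<and>
     (\<forall>x\<in>S. \<forall>y\<in>S. (\<lambda>u v. u \<in> S \<and> v \<in> S \<and> E u v)\<^sup>*\<^sup>* x y)"

end

theory Submission
  imports Defs
begin

text \<open>
  In a C4-free graph two non-adjacent vertices cannot have two non-adjacent common neighbours.
  Since c is adjacent to all of X and to none of Y, this makes the Y-neighbourhoods of
  non-adjacent vertices of X disjoint. An induced P4 (resp. 2P3) in X can then be extended
  through Y, and through the connecting edge outside the P4 (resp. the clique edge between the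
  two private Y-neighbours), to an induced P6.
\<close>

lemma graph_sym: "graph V E \<Longrightarrow> E u v \<longleftrightarrow> E v u"
  and graph_irrefl: "graph V E \<Longrightarrow> \<not> E u u"
  by (auto simp: graph_def)

lemma anticomplete_to_commute: "graph V E \<Longrightarrow> anticomplete_to E A B \<longleftrightarrow> anticomplete_to E B A"
  unfolding anticomplete_to_def by (metis graph_sym)

lemma all_less_four: "(\<forall>i<4::nat. P i) \<longleftrightarrow> P 0 \<and> P 1 \<and> P 2 \<and> P 3"
  by (simp add: numeral_eq_Suc less_Suc_eq all_conj_distrib)

lemma all_less_six: "(\<forall>i<6::nat. P i) \<longleftrightarrow> P 0 \<and> P 1 \<and> P 2 \<and> P 3 \<and> P 4 \<and> P 5"
  by (simp add: numeral_eq_Suc less_Suc_eq all_conj_distrib)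

lemma has_induced_listI:
  assumes "distinct xs" and "set xs \<subseteq> S"
    and "\<forall>i<length xs. \<forall>j<length xs. E (xs ! i) (xs ! j) \<longleftrightarrow> A i j"
  shows "has_induced S E (length xs) A"
  unfolding has_induced_def
proof (intro exI conjI)
  show "inj_on ((!) xs) {0..<length xs}"
    using assms(1) by (simp add: inj_on_def nth_eq_iff_index_eq)
  show "(!) xs ` {0..<length xs} \<subseteq> S"
    using assms(2) by (auto dest: nth_mem)
qed (use assms(3) in blast)

lemma induced_P6I:
  assumes "graph V E" and "{a, b, c, d, e, f} \<subseteq> V"
    and "E a b" "E b c" "E c d" "E d e" "E e f"
    and "\<not> E a c" "\<not> E a d" "\<not> E a e" "\<not> E a f" "\<not> E b d" "\<not> E b e" "\<not> E b f"
      "\<not> E c e" "\<not> E c f" "\<not> E d f"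
  shows "has_induced V E 6 path_adj"
proof -
  note adj_sym = graph_sym[OF assms(1)] and irr = graph_irrefl[OF assms(1)]
  have "distinct [a, b, c, d, e, f]"
    using assms(3-) irr by (simp, safe, simp_all add: adj_sym)
  moreover have "\<forall>i<6. \<forall>j<6. E ([a, b, c, d, e, f] ! i) ([a, b, c, d, e, f] ! j) \<longleftrightarrow> path_adj i j"
    unfolding all_less_six using assms(3-) irr by (simp add: path_adj_def adj_sym)
  ultimately show ?thesis
    using has_induced_listI[of "[a, b, c, d, e, f]" V E path_adj] assms(2) by (simp add: numeral_eq_Suc)
qed

lemma induced_C4I:
  assumes "graph V E" and "{a, b, c, d} \<subseteq> V" and "a \<noteq> c" "b \<noteq> d"
    and "E a b" "E b c" "E c d" "E d a" "\<not> E a c" "\<not> E b d"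
  shows "has_induced V E 4 c4_adj"
proof -
  note adj_sym = graph_sym[OF assms(1)] and irr = graph_irrefl[OF assms(1)]
  have "distinct [a, b, c, d]"
    using assms(3-) irr by (simp, safe, simp_all add: adj_sym)
  moreover have "\<forall>i<4. \<forall>j<4. E ([a, b, c, d] ! i) ([a, b, c, d] ! j) \<longleftrightarrow> c4_adj i j"
    unfolding all_less_four using assms(5-) irr by (simp add: c4_adj_def adj_sym)
  ultimately show ?thesis
    using has_induced_listI[of "[a, b, c, d]" V E c4_adj] assms(2) by (simp add: numeral_eq_Suc)
qed

lemma induced_P4E:
  assumes "has_induced S E 4 path_adj"
  obtains a b c d where "{a, b, c, d} \<subseteq> S" "E a b" "E b c" "E c d"
    "\<not> E a c" "\<not> E a d" "\<not> E b d"
proof -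
  obtain f where f: "f ` {0..<4} \<subseteq> S" "\<forall>i<4. \<forall>j<4. E (f i) (f j) \<longleftrightarrow> path_adj i j"
    using assms unfolding has_induced_def by blast
  show thesis
  proof (rule that[of "f 0" "f 1" "f 2" "f 3"])
    show "{f 0, f 1, f 2, f 3} \<subseteq> S" using f(1) by auto
  qed (use f(2) in \<open>simp_all add: all_less_four path_adj_def\<close>)
qed

lemma induced_twoP3E:
  assumes "has_induced S E 6 twoP3_adj"
  obtains a1 a2 a3 b1 b2 b3 where "{a1, a2, a3, b1, b2, b3} \<subseteq> S" "a1 \<noteq> a3" "b1 \<noteq> b3"
    "E a1 a2" "E a2 a3" "\<not> E a1 a3" "E b1 b2" "E b2 b3" "\<not> E b1 b3"
    "anticomplete_to E {a1, a2, a3} {b1, b2, b3}"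
proof -
  obtain f where f: "inj_on f {0..<6}" "f ` {0..<6} \<subseteq> S"
    "\<forall>i<6. \<forall>j<6. E (f i) (f j) \<longleftrightarrow> twoP3_adj i j"
    using assms unfolding has_induced_def by blast
  have adj: "E (f i) (f j) \<longleftrightarrow> twoP3_adj i j" if "i < 6" "j < 6" for i j
    using f(3) that by blast
  show thesis
  proof (rule that[of "f 0" "f 1" "f 2" "f 3" "f 4" "f 5"])
    show "{f 0, f 1, f 2, f 3, f 4, f 5} \<subseteq> S" using f(2) by auto
    show "f 0 \<noteq> f 2" using inj_onD[OF f(1), of 0 2] by auto
    show "f 3 \<noteq> f 5" using inj_onD[OF f(1), of 3 5] by auto
  qed (simp_all add: adj twoP3_adj_def anticomplete_to_def doubleton_eq_iff)
qed

abbreviation joined_in :: "('a \<Rightarrow> 'a \<Rightarrow> bool) \<Rightarrow> 'a set \<Rightarrow> 'a \<Rightarrow> 'a \<Rightarrow> bool" where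
  "joined_in E S \<equiv> (\<lambda>u v. u \<in> S \<and> v \<in> S \<and> E u v)\<^sup>*\<^sup>*"

lemma joined_in_sym:
  assumes "graph V E" and "joined_in E S x y"
  shows "joined_in E S y x"
  using assms(2)
  by (induction rule: rtranclp_induct)
    (auto intro: converse_rtranclp_into_rtranclp simp: graph_sym[OF assms(1)])

lemma not_connected_inducedE:
  assumes "graph V E" and "\<not> connected_induced E S" and "x \<in> S"
  obtains z where "z \<in> S" "\<not> joined_in E S x z"
proof -
  obtain u v where uv: "u \<in> S" "v \<in> S" "\<not> joined_in E S u v"
    using assms(2,3) unfolding connected_induced_def by blast
  show thesis
  proof (cases "joined_in E S x u")
    case True
    then have "\<not> joined_in E S x v"
      using uv(3) joined_in_sym[OF assms(1) True] rtranclp_trans by fast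
    with uv(2) show thesis by (rule that)
  next
    case False
    with uv(1) show thesis by (rule that)
  qed
qed

lemma not_joined_in_not_adjacent:
  assumes "joined_in E S x u" "u \<in> S" "z \<in> S" "\<not> joined_in E S x z"
  shows "u \<noteq> z \<and> \<not> E u z"
  using assms by (auto intro: rtranclp.rtrancl_into_rtrancl)

lemma C4_free_common_neighbours_adjacent:
  assumes "graph V E" and "\<not> has_induced V E 4 c4_adj" and "{x, x', c, y} \<subseteq> V"
    and "x \<noteq> x'" "\<not> E x x'" "c \<noteq> y" "E c x" "E c x'" "E y x" "E y x'"
  shows "E c y"
proof (rule ccontr)
  assume "\<not> E c y"
  then have "has_induced V E 4 c4_adj"
    using assms(1,3-) by - (rule induced_C4I[of V E x c x' y]; simp add: graph_sym[OF assms(1)])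
  with assms(2) show False ..
qed

text \<open>The path a-b-y enters the P4 at the last neighbour of y on it, which is x1 or x2.\<close>
lemma induced_P6_from_P4_and_pendant_edge:
  assumes "graph V E" and "{x1, x2, x3, x4, y, a, b} \<subseteq> V"
    and "E x1 x2" "E x2 x3" "E x3 x4" "\<not> E x1 x3" "\<not> E x1 x4" "\<not> E x2 x4"
    and "E x1 y" "\<not> E x3 y" "\<not> E x4 y"
    and "E a b" "E b y" "\<not> E a y" "\<forall>x\<in>{x1, x2, x3, x4}. \<not> E a x \<and> \<not> E b x"
  shows "has_induced V E 6 path_adj"
proof -
  note adj_sym = graph_sym[OF assms(1)]
  have "\<not> E y x3" "\<not> E y x4" using assms(10,11) by (simp_all add: adj_sym)
  show ?thesis
  proof (cases "E x2 y")
    case True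
    then have "E y x2" by (simp add: adj_sym)
    then show ?thesis
      using assms \<open>\<not> E y x3\<close> \<open>\<not> E y x4\<close> by - (rule induced_P6I[of V E a b y x2 x3 x4]; simp)
  next
    case False
    have "E y x1" using assms(9) by (simp add: adj_sym)
    moreover have "\<not> E y x2" using False by (simp add: adj_sym)
    ultimately show ?thesis
      using assms \<open>\<not> E y x3\<close> by - (rule induced_P6I[of V E a b y x1 x2 x3]; simp)
  qed
qed

locale apex_clique_attachment =
  fixes V :: "'a set" and E :: "'a \<Rightarrow> 'a \<Rightarrow> bool" and X Y :: "'a set" and c :: 'a
  assumes graph: "graph V E"
    and P6_free: "\<not> has_induced V E 6 path_adj"
    and C4_free: "\<not> has_induced V E 4 c4_adj"
    and X_subset: "X \<subseteq> V" and Y_subset: "Y \<subseteq> V" and apex_in: "c \<in> V"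
    and apex_notin_Y: "c \<notin> Y"
    and clique_Y: "clique E Y"
    and X_has_Y_neighbour: "\<forall>x\<in>X. \<exists>y\<in>Y. E x y"
    and apex_complete_X: "complete_to E {c} X"
    and apex_anticomplete_Y: "anticomplete_to E {c} Y"
begin

lemmas adj_sym = graph_sym[OF graph]

lemma Y_neighbour_not_shared:
  assumes "x \<in> X" "x' \<in> X" "x \<noteq> x'" "\<not> E x x'" "y \<in> Y" "E x y"
  shows "\<not> E x' y"
proof
  assume "E x' y"
  have "E c y"
  proof (rule C4_free_common_neighbours_adjacent[OF graph C4_free])
    show "{x, x', c, y} \<subseteq> V" using assms X_subset Y_subset apex_in by auto
    show "c \<noteq> y" using assms(5) apex_notin_Y by blast
    show "E c x" "E c x'" using assms(1,2) apex_complete_X by (auto simp: complete_to_def)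
    show "E y x" "E y x'" using assms(6) \<open>E x' y\<close> by (simp_all add: adj_sym)
  qed fact+
  with assms(5) apex_anticomplete_Y show False by (auto simp: anticomplete_to_def)
qed

lemma no_P4_with_pendant_edge:
  assumes "{x1, x2, x3, x4} \<subseteq> X"
    and "E x1 x2" "E x2 x3" "E x3 x4" "\<not> E x1 x3" "\<not> E x1 x4" "\<not> E x2 x4"
    and "a \<in> V" "b \<in> V" "E a b" "\<forall>y\<in>Y. E x1 y \<longrightarrow> E b y \<and> \<not> E a y"
    and "\<forall>x\<in>{x1, x2, x3, x4}. \<not> E a x \<and> \<not> E b x"
  shows False
proof -
  obtain y where y: "y \<in> Y" "E x1 y" using assms(1) X_has_Y_neighbour by auto
  have "x1 \<noteq> x3" "x1 \<noteq> x4" using assms(2,4,6,7) by (auto simp: adj_sym)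
  then have "\<not> E x3 y" "\<not> E x4 y"
    using Y_neighbour_not_shared[OF _ _ _ _ y] assms(1,5,6) by auto
  moreover have "{x1, x2, x3, x4, y, a, b} \<subseteq> V"
    using assms(1,8,9) y(1) X_subset Y_subset by auto
  moreover have "E b y" "\<not> E a y" using assms(11) y by auto
  ultimately have "has_induced V E 6 path_adj"
    using induced_P6_from_P4_and_pendant_edge[OF graph _ assms(2-7) y(2) _ _ assms(10) _ _ assms(12)]
    by blast
  with P6_free show False ..
qed

text \<open>A vertex z of X outside the component of the P4, with its neighbour in Y, is a pendant edge.\<close>
lemma P4_free_if_disconnected:
  assumes "\<not> connected_induced E X"
  shows "\<not> has_induced X E 4 path_adj"
proof
  assume "has_induced X E 4 path_adj"
  then obtain x1 x2 x3 x4 where P4: "{x1, x2, x3, x4} \<subseteq> X" "E x1 x2" "E x2 x3" "E x3 x4"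
    "\<not> E x1 x3" "\<not> E x1 x4" "\<not> E x2 x4" by (rule induced_P4E)
  obtain z where z: "z \<in> X" "\<not> joined_in E X x1 z"
    using not_connected_inducedE[OF graph assms] P4(1) by auto
  have step: "joined_in E X x1 x2" "joined_in E X x2 x3" "joined_in E X x3 x4"
    using P4(1-4) by (auto intro!: r_into_rtranclp)
  have j13: "joined_in E X x1 x3" using step(1,2) by (rule rtranclp_trans)
  have j14: "joined_in E X x1 x4" using j13 step(3) by (rule rtranclp_trans)
  have far: "x \<noteq> z \<and> \<not> E x z" if "x \<in> {x1, x2, x3, x4}" for x
    using that P4(1) not_joined_in_not_adjacent[OF _ _ z] rtranclp.rtrancl_refl step(1) j13 j14
    by (elim insertE emptyE) simp_all
  obtain y' where y': "y' \<in> Y" "E z y'" using z(1) X_has_Y_neighbour by auto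
  show False
  proof (rule no_P4_with_pendant_edge[OF P4])
    show "z \<in> V" "y' \<in> V" "E z y'" using z(1) y' X_subset Y_subset by auto
    have y'_far: "\<not> E x y'" if "x \<in> {x1, x2, x3, x4}" for x
      using Y_neighbour_not_shared[OF z(1) _ _ _ y'] far[OF that] that P4(1) by (auto simp: adj_sym)
    show "\<forall>x\<in>{x1, x2, x3, x4}. \<not> E z x \<and> \<not> E y' x"
      using far y'_far by (auto simp: adj_sym)
    show "\<forall>y\<in>Y. E x1 y \<longrightarrow> E y' y \<and> \<not> E z y"
    proof (intro ballI impI conjI)
      fix y assume "y \<in> Y" "E x1 y"
      then show "E y' y"
        using y'_far[of x1] y'(1) clique_Y by (auto simp: clique_def)
      show "\<not> E z y"
        using Y_neighbour_not_shared[OF _ z(1) _ _ \<open>y \<in> Y\<close> \<open>E x1 y\<close>] far[of x1] P4(1) by auto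
    qed
  qed
qed

lemma P4_free_if_pendant_edge:
  assumes "c' \<in> V" "c'' \<in> V" "complete_to E {c'} Y" "anticomplete_to E {c'} X"
    "anticomplete_to E {c''} (X \<union> Y)" "E c' c''"
  shows "\<not> has_induced X E 4 path_adj"
proof
  assume "has_induced X E 4 path_adj"
  then obtain x1 x2 x3 x4 where P4: "{x1, x2, x3, x4} \<subseteq> X" "E x1 x2" "E x2 x3" "E x3 x4"
    "\<not> E x1 x3" "\<not> E x1 x4" "\<not> E x2 x4" by (rule induced_P4E)
  show False
    by (rule no_P4_with_pendant_edge[OF P4 assms(2,1)])
      (use assms P4(1) in \<open>auto simp: adj_sym complete_to_def anticomplete_to_def\<close>)
qed

lemma P3_private_Y_neighbour:
  assumes "{a1, a2, a3} \<subseteq> X" "a1 \<noteq> a3" "E a1 a2" "E a2 a3" "\<not> E a1 a3"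
    and "B \<subseteq> X" "anticomplete_to E {a1, a2, a3} B"
  obtains y u v where "y \<in> Y" "u \<in> {a1, a2, a3}" "v \<in> {a1, a2, a3}"
    "E y u" "E u v" "\<not> E y v" "\<forall>b\<in>B. \<not> E y b"
proof -
  obtain y where y: "y \<in> Y" "E a1 y" using assms(1) X_has_Y_neighbour by auto
  have "\<not> E a3 y"
    using Y_neighbour_not_shared[OF _ _ assms(2,5) y] assms(1) by auto
  have y_off_B: "\<not> E y b" if "b \<in> B" for b
  proof -
    have "\<not> E a1 b" "\<not> E a2 b" using assms(7) that by (auto simp: anticomplete_to_def)
    then have "a1 \<noteq> b" using assms(3) by (auto simp: adj_sym)
    then show ?thesis
      using Y_neighbour_not_shared[OF _ _ _ \<open>\<not> E a1 b\<close> y] assms(1,6) that by (auto simp: adj_sym)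
  qed
  show thesis
  proof (cases "E a2 y")
    case True
    then show thesis
      using that[of y a2 a3] \<open>\<not> E a3 y\<close> y(1) y_off_B assms(4) by (simp add: adj_sym)
  next
    case False
    then show thesis
      using that[of y a1 a2] y y_off_B assms(3) by (simp add: adj_sym)
  qed
qed

text \<open>Private Y-neighbours of the two P3s are adjacent in the clique Y, giving a P6 through them.\<close>
lemma twoP3_free: "\<not> has_induced X E 6 twoP3_adj"
proof
  assume "has_induced X E 6 twoP3_adj"
  then obtain a1 a2 a3 b1 b2 b3 where P: "{a1, a2, a3, b1, b2, b3} \<subseteq> X" "a1 \<noteq> a3" "b1 \<noteq> b3"
    "E a1 a2" "E a2 a3" "\<not> E a1 a3" "E b1 b2" "E b2 b3" "\<not> E b1 b3"
    and anti: "anticomplete_to E {a1, a2, a3} {b1, b2, b3}"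
    by (rule induced_twoP3E)
  obtain y u v where A: "y \<in> Y" "u \<in> {a1, a2, a3}" "v \<in> {a1, a2, a3}"
    "E y u" "E u v" "\<not> E y v" "\<forall>b\<in>{b1, b2, b3}. \<not> E y b"
    using P anti by - (rule P3_private_Y_neighbour[of a1 a2 a3 "{b1, b2, b3}"]; auto)
  obtain y' u' v' where B: "y' \<in> Y" "u' \<in> {b1, b2, b3}" "v' \<in> {b1, b2, b3}"
    "E y' u'" "E u' v'" "\<not> E y' v'" "\<forall>a\<in>{a1, a2, a3}. \<not> E y' a"
    using P anti anticomplete_to_commute[OF graph]
    by - (rule P3_private_Y_neighbour[of b1 b2 b3 "{a1, a2, a3}"]; auto)
  have "y \<noteq> y'" using A(2,4) B(7) by auto
  then have "E y y'" using A(1) B(1) clique_Y by (auto simp: clique_def)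
  have cross: "\<not> E p q" if "p \<in> {a1, a2, a3}" "q \<in> {b1, b2, b3}" for p q
    using anti that by (auto simp: anticomplete_to_def)
  have "E v u" "E u y" "\<not> E v y" "\<not> E v y'" "\<not> E u y'" "\<not> E y u'" "\<not> E y v'"
    using A(2-7) B(2,3,7) by (auto simp: adj_sym)
  moreover have "{v, u, y, y', u', v'} \<subseteq> V"
  proof -
    have "{u, v, u', v'} \<subseteq> X" using A(2,3) B(2,3) P(1) by blast
    then show ?thesis using A(1) B(1) X_subset Y_subset by blast
  qed
  ultimately have "has_induced V E 6 path_adj"
    using induced_P6I[OF graph _ _ _ \<open>E y y'\<close> B(4,5) _ _ cross[OF A(3) B(2)] cross[OF A(3) B(3)]
        _ cross[OF A(2) B(2)] cross[OF A(2) B(3)] _ _ B(6)]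
    by blast
  with P6_free show False ..
qed

end

theorem lemma2p4:
  fixes V :: "'a set" and E :: "'a \<Rightarrow> 'a \<Rightarrow> bool" and X Y :: "'a set" and c :: 'a
  assumes "graph V E"
    and "\<not> has_induced V E 6 path_adj"
    and "\<not> has_induced V E 4 c4_adj"
    and "X \<subseteq> V" and "Y \<subseteq> V" and "c \<in> V"
    and "X \<inter> Y = {}" and "c \<notin> X" and "c \<notin> Y"
    and "clique E Y"
    and "\<forall>x\<in>X. \<exists>y\<in>Y. E x y"
    and "complete_to E {c} X" and "anticomplete_to E {c} Y"
    and "\<not> connected_induced E X \<or>
         (\<exists>c' c''. c' \<in> V - (X \<union> Y) \<and> c'' \<in> V - (X \<union> Y) \<and>
            complete_to E {c'} Y \<and> anticomplete_to E {c'} X \<and>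
            anticomplete_to E {c''} (X \<union> Y) \<and> E c' c'')"
  shows "\<not> has_induced X E 4 path_adj \<and> \<not> has_induced X E 6 twoP3_adj"
proof -
  interpret apex_clique_attachment V E X Y c
    using assms(1-6,9-13) by unfold_locales
  have "\<not> has_induced X E 4 path_adj"
    using assms(14) P4_free_if_disconnected P4_free_if_pendant_edge by blast
  with twoP3_free show ?thesis by blast
qed

end
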